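(* Let $n\geqslant 2$ and let $\alpha,\beta\in\mathcal{AO}_n$ be two elements of rank $n-1$. Then $\alpha\mathscr{J}\beta$ in the monoid $\mathcal{AO}_n$ if and only if $\mathrm{d}(\alpha)$ and $\mathrm{d}(\beta)$ have the same parity.
   Context: Let $\Omega_n=\{1<2<\cdots<n\}$. $\mathcal{I}_n$ denotes the symmetric inverse monoid of all partial injective maps of $\Omega_n$, maps written on the right and composed left to right; the rank of $\alpha$ is $|\mathrm{Im}(\alpha)|$. $\mathcal{AI}_n$ is the set of all $\alpha\in\mathcal{I}_n$ with $\alpha=\sigma|_{\mathrm{Dom}(\alpha)}$ for some even permutation $\sigma$ of $\Omega_n$. $\mathcal{POI}_n$ is the set of order-preserving elements of $\mathcal{I}_n$ and $\mathcal{AO}_n=\mathcal{AI}_n\cap\mathcal{POI}_n$ (a monoid). For $\alpha$ of rank $n-1$, $\mathrm{d}(\alpha)$ is the unique element of $\Omega_n\setminus\mathrm{Dom}(\alpha)$. $\mathscr{J}$ is Green's relation: $a\mathscr{J}b$ iff $MaM=MbM$ in the monoid $M$. *)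

theory Defs
  imports "HOL-Combinatorics.Permutations"
begin

definition I_n :: "nat \<Rightarrow> (nat \<rightharpoonup> nat) set" where
  "I_n n = {\<alpha>. dom \<alpha> \<subseteq> {1..n} \<and> ran \<alpha> \<subseteq> {1..n} \<and> inj_on \<alpha> (dom \<alpha>)}"

text \<open>Product written on the right, composed left to right: x(\<alpha>\<beta>) = (x\<alpha>)\<beta>.\<close>
definition pmult :: "(nat \<rightharpoonup> nat) \<Rightarrow> (nat \<rightharpoonup> nat) \<Rightarrow> (nat \<rightharpoonup> nat)" where
  "pmult \<alpha> \<beta> = \<beta> \<circ>\<^sub>m \<alpha>"

definition prank :: "(nat \<rightharpoonup> nat) \<Rightarrow> nat" where
  "prank \<alpha> = card (ran \<alpha>)"

definition AI_n :: "nat \<Rightarrow> (nat \<rightharpoonup> nat) set" where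
  "AI_n n = {\<alpha> \<in> I_n n. \<exists>\<sigma>. \<sigma> permutes {1..n} \<and> evenperm \<sigma> \<and>
                           (\<forall>x \<in> dom \<alpha>. \<alpha> x = Some (\<sigma> x))}"

definition POI_n :: "nat \<Rightarrow> (nat \<rightharpoonup> nat) set" where
  "POI_n n = {\<alpha> \<in> I_n n. \<forall>x \<in> dom \<alpha>. \<forall>y \<in> dom \<alpha>. x < y \<longrightarrow> the (\<alpha> x) < the (\<alpha> y)}"

definition AO_n :: "nat \<Rightarrow> (nat \<rightharpoonup> nat) set" where
  "AO_n n = AI_n n \<inter> POI_n n"

text \<open>d(\<alpha>): the unique element of Omega_n not in Dom(\<alpha>) (for rank n-1).\<close>
definition dpt :: "nat \<Rightarrow> (nat \<rightharpoonup> nat) \<Rightarrow> nat" where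
  "dpt n \<alpha> = (THE x. x \<in> {1..n} \<and> x \<notin> dom \<alpha>)"

definition AO_ideal :: "nat \<Rightarrow> (nat \<rightharpoonup> nat) \<Rightarrow> (nat \<rightharpoonup> nat) set" where
  "AO_ideal n a = {pmult (pmult s a) t | s t. s \<in> AO_n n \<and> t \<in> AO_n n}"

definition J_AO :: "nat \<Rightarrow> (nat \<rightharpoonup> nat) \<Rightarrow> (nat \<rightharpoonup> nat) \<Rightarrow> bool" where
  "J_AO n a b \<longleftrightarrow> AO_ideal n a = AO_ideal n b"

end

theory Submission
  imports Defs
begin

text \<open>
  Every element of \<open>AO_n\<close> is the restriction of an even permutation \<sigma> that is increasing on
  its domain. If the domain is \<open>\<Omega>\<^sub>n - {i}\<close>, then \<sigma> is forced to be the slide taking i to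
  j = \<sigma> i and moving the points between i and j by one step; being a product of |i - j|
  adjacent transpositions, it is even exactly when i and j have the same parity.

  If \<beta> = s \<alpha> t, the permutation underlying s is increasing on \<open>\<Omega>\<^sub>n - {d(\<beta>)}\<close> and maps it into
  \<open>\<Omega>\<^sub>n - {d(\<alpha>)}\<close>, hence sends d(\<beta>) to d(\<alpha>), which therefore have the same parity.
  Conversely, slides compose (\<open>slide j k \<circ> slide i j = slide i k\<close>), so when the parities agree,
  \<beta> is obtained from \<alpha> by multiplying with restricted slides on both sides, and vice versa.
\<close>

definition slide :: "nat \<Rightarrow> nat \<Rightarrow> nat \<Rightarrow> nat" where
  "slide i j x =
     (if x = i then j
      else if i < x \<and> x \<le> j then x - 1
      else if j \<le> x \<and> x < i then x + 1
      else x)"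

lemma slide_at [simp]: "slide i j i = j"
  by (simp add: slide_def)

lemma slide_self: "slide i i = id"
  by (auto simp: slide_def)

lemma slide_comp: "slide j k \<circ> slide i j = slide i k"
  unfolding fun_eq_iff comp_apply slide_def by (simp split: if_split) linarith

lemma slide_Suc: "slide j (Suc j) = transpose j (Suc j)"
  by (auto simp: slide_def transpose_def)

lemma strict_mono_on_slide: "strict_mono_on (- {i}) (slide i j)"
  by (rule strict_mono_onI) (simp add: slide_def split: if_split; linarith)

lemma slide_mem_minus:
  assumes "i \<in> {a..b}" "j \<in> {a..b}" "x \<in> {a..b} - {i}"
  shows "slide i j x \<in> {a..b} - {j}"
  using assms by (auto simp: slide_def)

lemma slide_permutes:
  assumes "i \<in> {a..b}" "j \<in> {a..b}"
  shows "slide i j permutes {a..b}"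
proof (rule bij_imp_permutes)
  show "bij_betw (slide i j) {a..b} {a..b}"
    by (rule bij_betw_byWitness[where f' = "slide j i"])
       (use assms in \<open>auto simp: slide_def\<close>)
qed (use assms in \<open>auto simp: slide_def\<close>)

lemma permutation_slide: "permutation (slide i j)"
  using slide_permutes[of i 0 "max i j" j] permutes_imp_permutation by fastforce

lemma evenperm_slide_add: "evenperm (slide i (i + d)) \<longleftrightarrow> even d"
proof (induction d)
  case 0
  then show ?case by (simp add: slide_self)
next
  case (Suc d)
  have "slide i (i + Suc d) = transpose (i + d) (Suc (i + d)) \<circ> slide i (i + d)"
    by (metis slide_Suc slide_comp add_Suc_right)
  then have "evenperm (slide i (i + Suc d)) \<longleftrightarrow>
      evenperm (transpose (i + d) (Suc (i + d))) = evenperm (slide i (i + d))"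
    using evenperm_comp[OF permutation_swap_id permutation_slide] by simp
  then show ?case
    using Suc.IH by (simp add: evenperm_swap)
qed

lemma evenperm_slide: "evenperm (slide i j) \<longleftrightarrow> (even i \<longleftrightarrow> even j)"
proof (cases "i \<le> j")
  case True
  then show ?thesis using evenperm_slide_add[of i "j - i"] by auto
next
  case False
  have "evenperm (slide i j) = evenperm (slide j i)"
    using evenperm_comp[OF permutation_slide permutation_slide, of i j j i]
    by (simp add: slide_comp slide_self)
  then show ?thesis using evenperm_slide_add[of j "i - j"] False by auto
qed

lemma strict_mono_on_image_eq:
  fixes f g :: "'a::wellorder \<Rightarrow> 'b::linorder"
  assumes "strict_mono_on A f" "strict_mono_on A g" "f ` A = g ` A" "x \<in> A"
  shows "f x = g x"
  using assms(4)
proof (induction x rule: less_induct)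
  case (less x)
  have not_less: "\<not> p x < q x"
    if p: "strict_mono_on A p" and q: "strict_mono_on A q" and "p ` A = q ` A"
      and below: "\<And>y. y \<in> A \<Longrightarrow> y < x \<Longrightarrow> p y = q y" for p q :: "'a \<Rightarrow> 'b"
  proof
    assume lt: "p x < q x"
    obtain y where y: "y \<in> A" "p x = q y" using \<open>p ` A = q ` A\<close> less.prems by blast
    consider "y < x" | "y = x" | "x < y" by fastforce
    then show False
    proof cases
      case 1
      then show False using below[of y] strict_mono_onD[OF p y(1) less.prems] y by simp
    next
      case 3
      then show False using strict_mono_onD[OF q less.prems y(1)] lt y by simp
    qed (use lt y in simp)
  qed
  have "\<not> f x < g x" by (rule not_less) (use assms less.IH in auto)
  moreover have "\<not> g x < f x" by (rule not_less) (use assms less.IH in auto)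
  ultimately show ?case by simp
qed

lemma permutes_strict_mono_on_eq_slide:
  assumes \<sigma>: "\<sigma> permutes {a..b}" and i: "i \<in> {a..b}"
    and mono: "strict_mono_on ({a..b} - {i}) \<sigma>"
  shows "\<sigma> = slide i (\<sigma> i)"
proof
  fix x
  have "\<sigma> i \<in> {a..b}" using i permutes_in_image[OF \<sigma>] by simp
  then have slide: "slide i (\<sigma> i) permutes {a..b}" using slide_permutes[OF i] by blast
  have image: "\<sigma> ` ({a..b} - {i}) = slide i (\<sigma> i) ` ({a..b} - {i})"
    using permutes_image[OF \<sigma>] permutes_image[OF slide] permutes_inj[OF \<sigma>] permutes_inj[OF slide]
    by (simp add: image_set_diff)
  have slide_mono: "strict_mono_on ({a..b} - {i}) (slide i (\<sigma> i))"
    by (rule monotone_on_subset[OF strict_mono_on_slide]) blast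
  show "\<sigma> x = slide i (\<sigma> i) x"
  proof (cases "x \<in> {a..b} - {i}")
    case True
    then show ?thesis by (rule strict_mono_on_image_eq[OF mono slide_mono image])
  next
    case False
    then show ?thesis using permutes_not_in[OF \<sigma>] permutes_not_in[OF slide] by auto
  qed
qed

lemma evenperm_strict_mono_on_parity:
  fixes \<sigma> :: "nat \<Rightarrow> nat"
  assumes "\<sigma> permutes {a..b}" "evenperm \<sigma>" "i \<in> {a..b}"
    and "strict_mono_on ({a..b} - {i}) \<sigma>"
  shows "even (\<sigma> i) \<longleftrightarrow> even i"
proof -
  have "\<sigma> = slide i (\<sigma> i)" by (rule permutes_strict_mono_on_eq_slide[OF assms(1,3,4)])
  then have "evenperm (slide i (\<sigma> i))" using assms(2) by metis
  then show ?thesis by (simp add: evenperm_slide)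
qed

lemma dom_Some_comp [simp]: "dom (Some \<circ> \<sigma>) = UNIV"
  by auto

lemma dom_pmult: "dom (pmult a b) = {x \<in> dom a. the (a x) \<in> dom b}"
  by (auto simp: pmult_def map_comp_def split: option.splits)

lemma pmult_assoc: "pmult (pmult a b) c = pmult a (pmult b c)"
  by (auto simp: pmult_def map_comp_def fun_eq_iff split: option.split)

lemma pmult_restrict_Some_comp:
  "pmult ((Some \<circ> \<sigma>) |` A) ((Some \<circ> \<tau>) |` B) = (Some \<circ> (\<tau> \<circ> \<sigma>)) |` {x \<in> A. \<sigma> x \<in> B}"
  by (auto simp: pmult_def map_comp_def restrict_map_def fun_eq_iff)

lemma pmult_restrict_Some_left:
  assumes "dom a \<subseteq> A"
  shows "pmult (Some |` A) a = a"
proof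
  fix x
  show "pmult (Some |` A) a x = a x"
  proof (cases "x \<in> A")
    case False
    then have "x \<notin> dom a" using assms by blast
    with False show ?thesis by (simp add: pmult_def domIff)
  qed (simp add: pmult_def)
qed

lemma pmult_restrict_Some_right: "ran a \<subseteq> A \<Longrightarrow> pmult a (Some |` A) = a"
  by (auto simp: pmult_def restrict_map_def fun_eq_iff map_comp_def ran_def split: option.split)

lemma restrict_Some_comp_in_AO_n:
  assumes A: "A \<subseteq> {1..n}" and \<sigma>: "\<sigma> permutes {1..n}" "evenperm \<sigma>" and mono: "strict_mono_on A \<sigma>"
  shows "(Some \<circ> \<sigma>) |` A \<in> AO_n n"
proof -
  let ?\<alpha> = "(Some \<circ> \<sigma>) |` A"
  have "inj_on ?\<alpha> A"
    using permutes_inj[OF \<sigma>(1)] by (auto simp: inj_on_def inj_def)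
  moreover have "ran ?\<alpha> \<subseteq> {1..n}"
    using A permutes_in_image[OF \<sigma>(1)] by (auto simp: ran_def restrict_map_def split: if_splits)
  ultimately have "?\<alpha> \<in> I_n n"
    using A by (simp add: I_n_def)
  moreover have "\<forall>x \<in> dom ?\<alpha>. ?\<alpha> x = Some (\<sigma> x)"
    by simp
  moreover have "\<forall>x \<in> dom ?\<alpha>. \<forall>y \<in> dom ?\<alpha>. x < y \<longrightarrow> the (?\<alpha> x) < the (?\<alpha> y)"
    using mono by (simp add: strict_mono_onD)
  ultimately show ?thesis
    unfolding AO_n_def AI_n_def POI_n_def using \<sigma> by blast
qed

lemma AO_nE:
  assumes "\<alpha> \<in> AO_n n"
  obtains \<sigma> A where "\<sigma> permutes {1..n}" "evenperm \<sigma>" "A \<subseteq> {1..n}"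
    "strict_mono_on A \<sigma>" "\<alpha> = (Some \<circ> \<sigma>) |` A"
proof -
  obtain \<sigma> where \<sigma>: "\<sigma> permutes {1..n}" "evenperm \<sigma>" "\<forall>x \<in> dom \<alpha>. \<alpha> x = Some (\<sigma> x)"
    and dom: "dom \<alpha> \<subseteq> {1..n}"
    and mono: "\<forall>x \<in> dom \<alpha>. \<forall>y \<in> dom \<alpha>. x < y \<longrightarrow> the (\<alpha> x) < the (\<alpha> y)"
    using assms unfolding AO_n_def AI_n_def POI_n_def I_n_def by blast
  have eq: "\<alpha> x = Some (\<sigma> x)" if "x \<in> dom \<alpha>" for x
    using \<sigma>(3) that by blast
  have "strict_mono_on (dom \<alpha>) \<sigma>"
  proof (rule strict_mono_onI)
    fix x y
    assume x: "x \<in> dom \<alpha>" and y: "y \<in> dom \<alpha>" and "x < y"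
    then have "the (\<alpha> x) < the (\<alpha> y)" using mono by blast
    then show "\<sigma> x < \<sigma> y" by (simp add: eq[OF x] eq[OF y])
  qed
  moreover have "\<alpha> = (Some \<circ> \<sigma>) |` dom \<alpha>"
  proof
    fix x
    show "\<alpha> x = ((Some \<circ> \<sigma>) |` dom \<alpha>) x"
    proof (cases "x \<in> dom \<alpha>")
      case True
      then show ?thesis using eq[OF True] by simp
    next
      case False
      then show ?thesis by (simp add: domIff)
    qed
  qed
  ultimately show ?thesis
    by (rule that[OF \<sigma>(1,2) dom])
qed

lemma pmult_in_AO_n:
  assumes "a \<in> AO_n n" "b \<in> AO_n n"
  shows "pmult a b \<in> AO_n n"
proof -
  obtain \<sigma> A where \<sigma>: "\<sigma> permutes {1..n}" "evenperm \<sigma>" "A \<subseteq> {1..n}"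
    "strict_mono_on A \<sigma>" and a: "a = (Some \<circ> \<sigma>) |` A"
    using assms(1) by (rule AO_nE)
  obtain \<tau> B where \<tau>: "\<tau> permutes {1..n}" "evenperm \<tau>" "strict_mono_on B \<tau>"
    and b: "b = (Some \<circ> \<tau>) |` B"
    using assms(2) by (rule AO_nE)
  have "evenperm (\<tau> \<circ> \<sigma>)"
    using \<sigma>(2) \<tau>(2) evenperm_comp[OF permutes_imp_permutation permutes_imp_permutation, OF _ \<tau>(1) _ \<sigma>(1)]
    by simp
  moreover have "strict_mono_on {x \<in> A. \<sigma> x \<in> B} (\<tau> \<circ> \<sigma>)"
    using \<sigma>(4) \<tau>(3) by (simp add: strict_mono_on_def)
  ultimately have "(Some \<circ> (\<tau> \<circ> \<sigma>)) |` {x \<in> A. \<sigma> x \<in> B} \<in> AO_n n"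
    using \<sigma>(3) permutes_compose[OF \<sigma>(1) \<tau>(1)] by (intro restrict_Some_comp_in_AO_n) auto
  then show ?thesis
    by (simp add: a b pmult_restrict_Some_comp)
qed

lemma self_mem_AO_ideal:
  assumes "a \<in> AO_n n"
  shows "a \<in> AO_ideal n a"
proof -
  have unit: "Some |` {1..n} \<in> AO_n n"
    using restrict_Some_comp_in_AO_n[of "{1..n}" n id] by (simp add: strict_mono_on_id)
  have "dom a \<subseteq> {1..n}" "ran a \<subseteq> {1..n}"
    using assms by (auto simp: AO_n_def AI_n_def I_n_def)
  then have "a = pmult (pmult (Some |` {1..n}) a) (Some |` {1..n})"
    by (simp add: pmult_restrict_Some_left pmult_restrict_Some_right)
  then show ?thesis
    unfolding AO_ideal_def using unit by blast
qed

lemma AO_ideal_subset: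
  assumes "a \<in> AO_ideal n b"
  shows "AO_ideal n a \<subseteq> AO_ideal n b"
proof
  fix x
  assume "x \<in> AO_ideal n a"
  then obtain s t where st: "s \<in> AO_n n" "t \<in> AO_n n" "x = pmult (pmult s a) t"
    unfolding AO_ideal_def by blast
  obtain s' t' where st': "s' \<in> AO_n n" "t' \<in> AO_n n" "a = pmult (pmult s' b) t'"
    using assms unfolding AO_ideal_def by blast
  have "x = pmult (pmult (pmult s s') b) (pmult t' t)"
    using st(3) st'(3) by (simp add: pmult_assoc)
  moreover have "pmult s s' \<in> AO_n n" "pmult t' t \<in> AO_n n"
    using st st' by (simp_all add: pmult_in_AO_n)
  ultimately show "x \<in> AO_ideal n b"
    unfolding AO_ideal_def by blast
qed

lemma J_AO_iff:
  assumes "a \<in> AO_n n" "b \<in> AO_n n"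
  shows "J_AO n a b \<longleftrightarrow> a \<in> AO_ideal n b \<and> b \<in> AO_ideal n a"
  using self_mem_AO_ideal[OF assms(1)] self_mem_AO_ideal[OF assms(2)] AO_ideal_subset
  unfolding J_AO_def by blast

lemma I_n_rank_pred_dom:
  assumes "\<alpha> \<in> I_n n" "prank \<alpha> = n - 1" "n \<ge> 1"
  shows "dpt n \<alpha> \<in> {1..n}" "dom \<alpha> = {1..n} - {dpt n \<alpha>}"
proof -
  have dom: "dom \<alpha> \<subseteq> {1..n}" and inj: "inj_on \<alpha> (dom \<alpha>)"
    using assms(1) by (auto simp: I_n_def)
  have "\<alpha> ` dom \<alpha> = Some ` ran \<alpha>"
    by (force simp: ran_def)
  then have "card (dom \<alpha>) = card (ran \<alpha>)"
    using card_image[OF inj] card_image[of Some "ran \<alpha>"] by simp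
  then have card: "card (dom \<alpha>) = n - 1"
    using assms(2) by (simp add: prank_def)
  then have "dom \<alpha> \<noteq> {1..n}"
    using assms(3) by auto
  then obtain i where i: "i \<in> {1..n}" "i \<notin> dom \<alpha>"
    using dom by blast
  have "card ({1..n} - {i}) \<le> card (dom \<alpha>)"
    using i(1) card by simp
  then have dom_eq: "dom \<alpha> = {1..n} - {i}"
    using dom i by (intro card_seteq) auto
  have "dpt n \<alpha> = i"
    unfolding dpt_def using i dom_eq by (intro the_equality) auto
  then show "dpt n \<alpha> \<in> {1..n}" "dom \<alpha> = {1..n} - {dpt n \<alpha>}"
    using i(1) dom_eq by simp_all
qed

lemma AO_n_rank_pred_eq_slide:
  assumes "\<alpha> \<in> AO_n n" "prank \<alpha> = n - 1" "n \<ge> 1"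
  obtains i j where "dpt n \<alpha> = i" "i \<in> {1..n}" "j \<in> {1..n}" "even i \<longleftrightarrow> even j"
    "\<alpha> = (Some \<circ> slide i j) |` ({1..n} - {i})"
proof -
  define i where "i = dpt n \<alpha>"
  have "\<alpha> \<in> I_n n"
    using assms(1) by (simp add: AO_n_def AI_n_def)
  then have i: "i \<in> {1..n}" and dom: "dom \<alpha> = {1..n} - {i}"
    unfolding i_def using I_n_rank_pred_dom assms(2,3) by blast+
  obtain \<sigma> A where \<sigma>: "\<sigma> permutes {1..n}" "evenperm \<sigma>" "strict_mono_on A \<sigma>"
    and \<alpha>: "\<alpha> = (Some \<circ> \<sigma>) |` A"
    using assms(1) by (rule AO_nE)
  have A: "A = {1..n} - {i}"
    using dom by (simp add: \<alpha>)
  define j where "j = \<sigma> i"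
  have "\<sigma> = slide i j"
    unfolding j_def using \<sigma>(1) i \<sigma>(3) A by (intro permutes_strict_mono_on_eq_slide) auto
  moreover have "even j \<longleftrightarrow> even i"
    unfolding j_def using \<sigma> i A by (intro evenperm_strict_mono_on_parity) auto
  moreover have "j \<in> {1..n}"
    unfolding j_def using i permutes_in_image[OF \<sigma>(1)] by simp
  ultimately show ?thesis
    using that[OF i_def[symmetric] i] \<alpha> A by simp
qed

lemma AO_ideal_parity:
  assumes "\<beta> \<in> AO_ideal n \<alpha>" "i \<in> {1..n}" "i' \<in> {1..n}"
    and dom_\<alpha>: "dom \<alpha> = {1..n} - {i}" and dom_\<beta>: "dom \<beta> = {1..n} - {i'}"
  shows "even i \<longleftrightarrow> even i'"
proof -
  obtain s t where s: "s \<in> AO_n n" and \<beta>: "\<beta> = pmult (pmult s \<alpha>) t"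
    using assms(1) unfolding AO_ideal_def by blast
  obtain \<sigma> A where \<sigma>: "\<sigma> permutes {1..n}" "evenperm \<sigma>" "strict_mono_on A \<sigma>"
    and s_eq: "s = (Some \<circ> \<sigma>) |` A"
    using s by (rule AO_nE)
  have "dom \<beta> \<subseteq> {x \<in> A. \<sigma> x \<in> dom \<alpha>}"
    unfolding \<beta> dom_pmult by (auto simp: s_eq)
  then have sub: "{1..n} - {i'} \<subseteq> A" and maps: "\<And>x. x \<in> {1..n} - {i'} \<Longrightarrow> \<sigma> x \<noteq> i"
    unfolding dom_\<alpha> dom_\<beta> by auto
  have "\<sigma> i' = i"
  proof (rule ccontr)
    assume "\<sigma> i' \<noteq> i"
    obtain y where "y \<in> {1..n}" "\<sigma> y = i"
      using assms(2) permutes_image[OF \<sigma>(1)] by (metis imageE)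
    with \<open>\<sigma> i' \<noteq> i\<close> maps show False by blast
  qed
  moreover have "even (\<sigma> i') \<longleftrightarrow> even i'"
    using \<sigma>(1,2) assms(3) monotone_on_subset[OF \<sigma>(3) sub]
    by (rule evenperm_strict_mono_on_parity)
  ultimately show ?thesis by simp
qed

lemma slide_map_mem_AO_ideal:
  assumes "i \<in> {1..n}" "j \<in> {1..n}" "i' \<in> {1..n}" "j' \<in> {1..n}"
    and "even i \<longleftrightarrow> even i'" "even j \<longleftrightarrow> even j'"
  shows "(Some \<circ> slide i' j') |` ({1..n} - {i'}) \<in> AO_ideal n ((Some \<circ> slide i j) |` ({1..n} - {i}))"
proof -
  have slide_in_AO_n: "(Some \<circ> slide k l) |` ({1..n} - {k}) \<in> AO_n n"
    if "k \<in> {1..n}" "l \<in> {1..n}" "even k \<longleftrightarrow> even l" for k l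
    using that slide_permutes[OF that(1,2)] monotone_on_subset[OF strict_mono_on_slide]
    by (intro restrict_Some_comp_in_AO_n) (auto simp: evenperm_slide)
  have restrict_eq: "{x \<in> {1..n} - {i'}. slide i' k x \<in> {1..n} - {k}} = {1..n} - {i'}"
    if "k \<in> {1..n}" for k
    using slide_mem_minus[OF assms(3) that] by blast
  have "(Some \<circ> slide i' j') |` ({1..n} - {i'}) =
      pmult (pmult ((Some \<circ> slide i' i) |` ({1..n} - {i'})) ((Some \<circ> slide i j) |` ({1..n} - {i})))
        ((Some \<circ> slide j j') |` ({1..n} - {j}))"
    by (simp only: pmult_restrict_Some_comp slide_comp restrict_eq[OF assms(1)] restrict_eq[OF assms(2)])
  moreover have "(Some \<circ> slide i' i) |` ({1..n} - {i'}) \<in> AO_n n"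
    using assms by (intro slide_in_AO_n) auto
  moreover have "(Some \<circ> slide j j') |` ({1..n} - {j}) \<in> AO_n n"
    using assms by (intro slide_in_AO_n) auto
  ultimately show ?thesis
    unfolding AO_ideal_def by blast
qed

theorem proposition1p3:
  fixes n :: nat and \<alpha> \<beta> :: "nat \<rightharpoonup> nat"
  assumes "n \<ge> 2"
    and "\<alpha> \<in> AO_n n" and "\<beta> \<in> AO_n n"
    and "prank \<alpha> = n - 1" and "prank \<beta> = n - 1"
  shows "J_AO n \<alpha> \<beta> \<longleftrightarrow> (even (dpt n \<alpha>) \<longleftrightarrow> even (dpt n \<beta>))"
proof -
  have n: "n \<ge> 1" using assms(1) by simp
  obtain i j where i: "dpt n \<alpha> = i" "i \<in> {1..n}" "j \<in> {1..n}" "even i \<longleftrightarrow> even j"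
    and \<alpha>: "\<alpha> = (Some \<circ> slide i j) |` ({1..n} - {i})"
    using AO_n_rank_pred_eq_slide[OF assms(2,4) n] .
  obtain i' j' where i': "dpt n \<beta> = i'" "i' \<in> {1..n}" "j' \<in> {1..n}" "even i' \<longleftrightarrow> even j'"
    and \<beta>: "\<beta> = (Some \<circ> slide i' j') |` ({1..n} - {i'})"
    using AO_n_rank_pred_eq_slide[OF assms(3,5) n] .
  have "J_AO n \<alpha> \<beta> \<longleftrightarrow> \<beta> \<in> AO_ideal n \<alpha> \<and> \<alpha> \<in> AO_ideal n \<beta>"
    using J_AO_iff[OF assms(2,3)] by blast
  also have "\<dots> \<longleftrightarrow> (even i \<longleftrightarrow> even i')"
  proof
    assume "\<beta> \<in> AO_ideal n \<alpha> \<and> \<alpha> \<in> AO_ideal n \<beta>"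
    then have "\<beta> \<in> AO_ideal n \<alpha>" ..
    then show "even i \<longleftrightarrow> even i'"
      by (rule AO_ideal_parity[OF _ i(2) i'(2)]) (simp_all add: \<alpha> \<beta>)
  next
    assume "even i \<longleftrightarrow> even i'"
    then show "\<beta> \<in> AO_ideal n \<alpha> \<and> \<alpha> \<in> AO_ideal n \<beta>"
      unfolding \<alpha> \<beta> using i i' by (intro conjI slide_map_mem_AO_ideal) auto
  qed
  also have "\<dots> \<longleftrightarrow> (even (dpt n \<alpha>) \<longleftrightarrow> even (dpt n \<beta>))"
    using i(1) i'(1) by simp
  finally show ?thesis .
qed

end
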